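(* Fix integers $d,n$ with $2\leq n\leq d+1$, and real numbers $\tau,c>0$. Every $n$-point configuration $X=\{x_i\}_{i\in[n]}$ in the unit sphere $S^{d-1}\subseteq\mathbb{R}^d$ that minimizes $\mathcal{L}_{\tau,c}(X):=\sum_{k=1}^n\log\big(c+\sum_{j\neq k}\exp(\langle x_j,x_k\rangle/\tau)\big)$ satisfies $\sum_{i=1}^n x_i=0$ and $\langle x_i,x_j\rangle=-\frac{1}{n-1}$ for all $i\neq j$ in $[n]$.
   Context: $[n]=\{1,\ldots,n\}$; minimization is over all $n$-point configurations in $S^{d-1}$. *)

theory Defs
  imports "HOL-Analysis.Analysis"
begin

definition sphere_config :: "nat \<Rightarrow> (nat \<Rightarrow> real ^ 'd) \<Rightarrow> bool" where
  "sphere_config n X \<longleftrightarrow> (\<forall>i\<in>{1..n}. norm (X i) = 1)"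

definition loss :: "real \<Rightarrow> real \<Rightarrow> nat \<Rightarrow> (nat \<Rightarrow> real ^ 'd) \<Rightarrow> real" where
  "loss \<tau> c n X = (\<Sum>k=1..n. ln (c + (\<Sum>j\<in>{1..n}-{k}. exp (inner (X j) (X k) / \<tau>))))"

definition is_minimizer :: "real \<Rightarrow> real \<Rightarrow> nat \<Rightarrow> (nat \<Rightarrow> real ^ 'd) \<Rightarrow> bool" where
  "is_minimizer \<tau> c n X \<longleftrightarrow> sphere_config n X \<and>
     (\<forall>Y :: nat \<Rightarrow> real ^ 'd. sphere_config n Y \<longrightarrow> loss \<tau> c n X \<le> loss \<tau> c n Y)"

end

theory Submission
  imports Defs
begin

(* Write q = n - 1 and let u_k be the mean of the exponents <x_j, x_k>/tau over j ~= k.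
   By convexity of exp, the k-th term of the loss is at least h(u_k) = ln(c + q exp u_k), with
   equality only if all these exponents equal u_k. Since the sum over j ~= k of <x_j, x_k> is
   <V, x_k> - 1 for V = x_1 + ... + x_n, the u_k sum to n m + |V|^2/(q tau) with m = -1/(q tau),
   so the tangent line of the convex function h at m gives L(X) >= n h(m) + h'(m) |V|^2/(q tau).
   A regular simplex, which fits into S^(d-1) as n <= d + 1, attains n h(m). Hence a minimizer
   has V = 0 and <x_j, x_k> = tau u_k = (<V, x_k> - 1)/q = -1/q. *)

lemma exp_ge_tangent_line:
  fixes u z :: real
  shows "exp u * (1 + z - u) \<le> exp z"
proof -
  have "exp u * (1 + (z - u)) \<le> exp u * exp (z - u)"
    by (intro mult_left_mono) auto
  then show ?thesis by (simp add: exp_diff algebra_simps)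
qed

lemma exp_eq_tangent_line_iff:
  fixes u z :: real
  shows "exp z = exp u * (1 + z - u) \<longleftrightarrow> z = u"
proof
  assume eq: "exp z = exp u * (1 + z - u)"
  show "z = u"
  proof (rule ccontr)
    assume "z \<noteq> u"
    then have "1 + (z - u) < exp (z - u)"
      using exp_minus_greater[of "u - z"] by simp
    then have "exp u * (1 + (z - u)) < exp u * exp (z - u)" by simp
    then show False using eq by (simp add: exp_diff)
  qed
qed simp

lemma sum_exp_minus_card_exp_mean:
  fixes f :: "'a \<Rightarrow> real"
  assumes "finite J" and "J \<noteq> {}"
  defines "\<mu> \<equiv> (\<Sum>j\<in>J. f j) / card J"
  shows "(\<Sum>j\<in>J. exp (f j)) - card J * exp \<mu> = (\<Sum>j\<in>J. exp (f j) - exp \<mu> * (1 + f j - \<mu>))"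
proof -
  have "(\<Sum>j\<in>J. 1 + f j - \<mu>) = card J"
    using assms by (simp add: sum.distrib sum_subtractf \<mu>_def)
  then show ?thesis by (simp add: sum_subtractf flip: sum_distrib_left)
qed

lemma card_mult_exp_mean_le_sum_exp:
  fixes f :: "'a \<Rightarrow> real"
  assumes "finite J"
  shows "card J * exp ((\<Sum>j\<in>J. f j) / card J) \<le> (\<Sum>j\<in>J. exp (f j))"
proof (cases "J = {}")
  case False
  let ?\<mu> = "(\<Sum>j\<in>J. f j) / card J"
  have "0 \<le> (\<Sum>j\<in>J. exp (f j) - exp ?\<mu> * (1 + f j - ?\<mu>))"
    by (intro sum_nonneg) (metis diff_ge_0_iff_ge exp_ge_tangent_line)
  then show ?thesis
    using sum_exp_minus_card_exp_mean[OF assms False, of f] by linarith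
qed simp

lemma sum_exp_eq_card_mult_exp_mean_imp_eq_mean:
  fixes f :: "'a \<Rightarrow> real"
  assumes "finite J" and "j \<in> J"
    and "(\<Sum>j\<in>J. exp (f j)) = card J * exp ((\<Sum>j\<in>J. f j) / card J)"
  shows "f j = (\<Sum>j\<in>J. f j) / card J"
proof -
  define \<mu> where "\<mu> = (\<Sum>j\<in>J. f j) / card J"
  define gap where "gap i = exp (f i) - exp \<mu> * (1 + f i - \<mu>)" for i
  have "J \<noteq> {}" using \<open>j \<in> J\<close> by blast
  then have "sum gap J = 0"
    using sum_exp_minus_card_exp_mean[OF \<open>finite J\<close>, of f] assms(3)
    unfolding gap_def \<mu>_def by linarith
  moreover have "\<forall>i\<in>J. 0 \<le> gap i"
    unfolding gap_def by (metis diff_ge_0_iff_ge exp_ge_tangent_line)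
  ultimately have "gap j = 0"
    using sum_nonneg_eq_0_iff[OF \<open>finite J\<close>] \<open>j \<in> J\<close> by blast
  then have "exp (f j) = exp \<mu> * (1 + f j - \<mu>)"
    by (simp add: gap_def)
  then show ?thesis
    unfolding \<mu>_def by (rule exp_eq_tangent_line_iff[THEN iffD1])
qed

lemma ln_add_mult_exp_ge_tangent_line:
  fixes a c m u :: real
  assumes "a > 0" and "c > 0"
  shows "ln (c + a * exp m) + a * exp m / (c + a * exp m) * (u - m) \<le> ln (c + a * exp u)"
proof -
  define B where "B = c + a * exp m"
  define p where "p = a * exp m / B"
  have "B > 0" using assms by (simp add: B_def add_pos_pos)
  then have "0 \<le> p" and "p \<le> 1" using assms by (auto simp: p_def B_def)
  have "exp (p * (u - m)) \<le> (1 - p) * exp 0 + p * exp (u - m)"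
    using convex_onD[OF exp_convex, of p 0 "u - m"] \<open>0 \<le> p\<close> \<open>p \<le> 1\<close> by simp
  also have "\<dots> = (c + a * exp u) / B"
  proof -
    have "1 - p = c / B" and "p * exp (u - m) = a * exp u / B"
      using \<open>B > 0\<close> by (auto simp: p_def B_def field_simps exp_diff)
    then show ?thesis by (simp add: add_divide_distrib)
  qed
  finally have "p * (u - m) \<le> ln ((c + a * exp u) / B)"
    using \<open>B > 0\<close> assms by (subst ln_ge_iff) (auto intro!: divide_pos_pos add_pos_pos)
  then show ?thesis
    using \<open>B > 0\<close> assms by (simp add: ln_divide_pos add_pos_pos B_def p_def)
qed

definition mean_exponent :: "real \<Rightarrow> nat \<Rightarrow> (nat \<Rightarrow> 'a::real_inner) \<Rightarrow> nat \<Rightarrow> real" where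
  "mean_exponent \<tau> n X k = (\<Sum>j\<in>{1..n}-{k}. inner (X j) (X k) / \<tau>) / (real n - 1)"

(* The k-th term of the loss when all n - 1 exponents in it are equal to z. *)
definition uniform_term :: "real \<Rightarrow> nat \<Rightarrow> real \<Rightarrow> real" where
  "uniform_term c n z = ln (c + (real n - 1) * exp z)"

lemma card_others: "k \<in> {1..n} \<Longrightarrow> real (card ({1..n} - {k})) = real n - 1"
  by (simp add: of_nat_diff)

lemma uniform_term_mean_exponent_le:
  fixes X :: "nat \<Rightarrow> 'a::real_inner"
  assumes "k \<in> {1..n}" and "c > 0"
  shows "uniform_term c n (mean_exponent \<tau> n X k)
           \<le> ln (c + (\<Sum>j\<in>{1..n}-{k}. exp (inner (X j) (X k) / \<tau>)))"
proof -
  have "(real n - 1) * exp (mean_exponent \<tau> n X k)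
          \<le> (\<Sum>j\<in>{1..n}-{k}. exp (inner (X j) (X k) / \<tau>))"
    using card_mult_exp_mean_le_sum_exp[of "{1..n}-{k}" "\<lambda>j. inner (X j) (X k) / \<tau>"]
      card_others[OF assms(1)]
    by (simp add: mean_exponent_def)
  moreover have "0 < c + (real n - 1) * exp (mean_exponent \<tau> n X k)"
    using assms by (intro add_pos_nonneg) auto
  ultimately show ?thesis by (simp add: uniform_term_def)
qed

lemma exponent_eq_mean_exponent:
  fixes X :: "nat \<Rightarrow> 'a::real_inner"
  assumes "k \<in> {1..n}" and "c > 0" and "j \<in> {1..n}-{k}"
    and "uniform_term c n (mean_exponent \<tau> n X k)
           = ln (c + (\<Sum>j\<in>{1..n}-{k}. exp (inner (X j) (X k) / \<tau>)))"
  shows "inner (X j) (X k) / \<tau> = mean_exponent \<tau> n X k"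
proof -
  have "0 < c + (real n - 1) * exp (mean_exponent \<tau> n X k)"
    using assms by (intro add_pos_nonneg) auto
  moreover have "0 < c + (\<Sum>j\<in>{1..n}-{k}. exp (inner (X j) (X k) / \<tau>))"
    using assms by (intro add_pos_nonneg sum_nonneg) auto
  ultimately have "(\<Sum>j\<in>{1..n}-{k}. exp (inner (X j) (X k) / \<tau>))
                     = (real n - 1) * exp (mean_exponent \<tau> n X k)"
    using assms(4) by (simp add: uniform_term_def)
  then show ?thesis
    using sum_exp_eq_card_mult_exp_mean_imp_eq_mean[of "{1..n}-{k}" j "\<lambda>j. inner (X j) (X k) / \<tau>"]
      card_others[OF assms(1)] assms(3)
    by (simp add: mean_exponent_def)
qed

lemma sum_inner_others:
  fixes X :: "nat \<Rightarrow> 'a::real_inner"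
  assumes "k \<in> {1..n}" and "norm (X k) = 1"
  shows "(\<Sum>j\<in>{1..n}-{k}. inner (X j) (X k)) = inner (\<Sum>j=1..n. X j) (X k) - 1"
  using sum.remove[of "{1..n}" k "\<lambda>j. inner (X j) (X k)"] assms
  by (simp add: inner_sum_left norm_eq_1)

lemma sum_mean_exponent:
  fixes X :: "nat \<Rightarrow> 'a::real_inner"
  assumes "\<forall>i\<in>{1..n}. norm (X i) = 1"
  shows "(\<Sum>k=1..n. mean_exponent \<tau> n X k)
           = ((norm (\<Sum>i=1..n. X i))\<^sup>2 - n) / ((real n - 1) * \<tau>)"
proof -
  let ?V = "\<Sum>i=1..n. X i"
  have "(\<Sum>k=1..n. \<Sum>j\<in>{1..n}-{k}. inner (X j) (X k)) = (\<Sum>k=1..n. inner ?V (X k) - 1)"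
    using assms by (intro sum.cong refl sum_inner_others) auto
  also have "\<dots> = (norm ?V)\<^sup>2 - n"
    by (simp add: sum_subtractf inner_sum_right power2_norm_eq_inner)
  finally show ?thesis
    by (simp add: mean_exponent_def sum_divide_distrib[symmetric] mult.commute)
qed

lemma mean_exponent_of_sum_eq_0:
  fixes X :: "nat \<Rightarrow> 'a::real_inner"
  assumes "k \<in> {1..n}" and "norm (X k) = 1" and "(\<Sum>i=1..n. X i) = 0"
  shows "mean_exponent \<tau> n X k = -1 / ((real n - 1) * \<tau>)"
proof -
  have "(\<Sum>j\<in>{1..n}-{k}. inner (X j) (X k)) = -1"
    using sum_inner_others[of k n X] assms by simp
  then show ?thesis
    by (simp add: mean_exponent_def mult.commute flip: sum_divide_distrib)
qed

lemma sum_uniform_term_ge: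
  fixes X :: "nat \<Rightarrow> 'a::real_inner"
  assumes "2 \<le> n" and "\<tau> > 0" and "c > 0" and "\<forall>i\<in>{1..n}. norm (X i) = 1"
  shows "\<exists>p>0. n * uniform_term c n (-1 / ((real n - 1) * \<tau>)) + p * (norm (\<Sum>i=1..n. X i))\<^sup>2
           \<le> (\<Sum>k=1..n. uniform_term c n (mean_exponent \<tau> n X k))"
proof -
  define q where "q = real n - 1"
  define m where "m = -1 / (q * \<tau>)"
  define slope where "slope = q * exp m / (c + q * exp m)"
  let ?V = "\<Sum>i=1..n. X i"
  have "q > 0" using assms(1) by (simp add: q_def)
  then have "slope > 0" using assms(3) by (simp add: slope_def add_pos_pos)
  have tangent: "uniform_term c n m + slope * (mean_exponent \<tau> n X k - m)
                   \<le> uniform_term c n (mean_exponent \<tau> n X k)" for k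
    using ln_add_mult_exp_ge_tangent_line[OF \<open>q > 0\<close> assms(3)]
    by (simp add: uniform_term_def slope_def q_def)
  have "(\<Sum>k=1..n. mean_exponent \<tau> n X k - m) = (\<Sum>k=1..n. mean_exponent \<tau> n X k) - n * m"
    by (simp add: sum_subtractf)
  also have "\<dots> = (norm ?V)\<^sup>2 / (q * \<tau>)"
    unfolding sum_mean_exponent[OF assms(4)] m_def q_def by (simp add: diff_divide_distrib)
  finally have "(\<Sum>k=1..n. mean_exponent \<tau> n X k - m) = (norm ?V)\<^sup>2 / (q * \<tau>)" .
  then have "n * uniform_term c n m + slope / (q * \<tau>) * (norm ?V)\<^sup>2
               = (\<Sum>k=1..n. uniform_term c n m + slope * (mean_exponent \<tau> n X k - m))"
    by (simp add: sum.distrib flip: sum_distrib_left)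
  also have "\<dots> \<le> (\<Sum>k=1..n. uniform_term c n (mean_exponent \<tau> n X k))"
    by (intro sum_mono tangent)
  finally show ?thesis
    using \<open>slope > 0\<close> \<open>q > 0\<close> assms(2) unfolding m_def q_def
    by (intro exI[of _ "slope / (q * \<tau>)"]) (simp add: q_def)
qed

lemma regular_simplex_from_orthonormal:
  fixes e :: "nat \<Rightarrow> 'a::real_inner"
  assumes "2 \<le> n"
    and orthonormal: "\<And>i j. i \<in> {1..<n} \<Longrightarrow> j \<in> {1..<n} \<Longrightarrow>
                        inner (e i) (e j) = (if i = j then 1 else 0)"
  shows "\<exists>Y :: nat \<Rightarrow> 'a. \<forall>i\<in>{1..n}. \<forall>j\<in>{1..n}.
           inner (Y i) (Y j) = (if i = j then 1 else - 1 / (real n - 1))"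
proof -
  define q where "q = real n - 1"
  define w where "w = sqrt q"
  define r where "r = sqrt (real n)"
  define s where "s = (\<Sum>i\<in>{1..<n}. e i)"
  (* The coefficients solve alpha^2 = n/q (unit norms) and alpha + beta q = 1/w
     (inner product -1/q with Y n). *)
  define \<alpha> where "\<alpha> = r / w"
  define \<beta> where "\<beta> = (1 - r) / (w * w * w)"
  define Y where "Y i = (if i = n then (- 1 / w) *\<^sub>R s else \<alpha> *\<^sub>R e i + \<beta> *\<^sub>R s)" for i
  have "q > 0" using assms(1) by (simp add: q_def)
  then have "w > 0" and w2: "w * w = q" by (simp_all add: w_def)
  have r2: "r * r = q + 1" by (simp add: r_def q_def)
  have es: "inner (e i) s = 1" and se: "inner s (e i) = 1" if "i \<in> {1..<n}" for i
  proof -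
    have "inner (e i) s = (\<Sum>j\<in>{1..<n}. if i = j then 1 else 0)"
      unfolding s_def inner_sum_right using orthonormal that by (intro sum.cong) auto
    then show "inner (e i) s = 1" using that by simp
    then show "inner s (e i) = 1" by (simp add: inner_commute)
  qed
  have ss: "inner s s = q"
    using es assms(1) by (simp add: s_def inner_sum_left q_def of_nat_diff)
  have alpha_sq: "\<alpha> * \<alpha> = 1 + 1 / q"
    using \<open>w > 0\<close> \<open>q > 0\<close> by (simp add: \<alpha>_def r2 w2 field_simps)
  have alpha_plus_beta_q: "\<alpha> + \<beta> * q = 1 / w"
    unfolding \<alpha>_def \<beta>_def w2[symmetric] using \<open>w > 0\<close> by (simp add: field_simps)
  have cross_coeff: "2 * \<alpha> * \<beta> + \<beta> * \<beta> * q = - 1 / q"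
  proof -
    have "2 * \<alpha> * \<beta> + \<beta> * \<beta> * q = \<beta> * (\<alpha> + (\<alpha> + \<beta> * q))" by algebra
    also have "\<dots> = \<beta> * (\<alpha> + 1 / w)" by (simp only: alpha_plus_beta_q)
    also have "\<dots> = (1 - r * r) / ((w * w) * (w * w))"
      using \<open>w > 0\<close> by (simp add: \<alpha>_def \<beta>_def field_simps)
    also have "\<dots> = - 1 / q"
      using \<open>q > 0\<close> by (simp add: r2 w2)
    finally show ?thesis .
  qed
  have Ynn: "inner (Y n) (Y n) = 1"
    using \<open>w > 0\<close> \<open>q > 0\<close> by (simp add: Y_def ss flip: w2)
  have Yin: "inner (Y i) (Y n) = - 1 / q" if "i \<in> {1..<n}" for i
  proof -
    have "inner (Y i) (Y n) = (- 1 / w) * (\<alpha> + \<beta> * q)"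
      using that by (simp add: Y_def inner_add_left es ss algebra_simps)
    also have "\<dots> = (- 1 / w) * (1 / w)" by (simp only: alpha_plus_beta_q)
    also have "\<dots> = - 1 / q" by (simp flip: w2)
    finally show ?thesis .
  qed
  have Yij: "inner (Y i) (Y j) = \<alpha> * \<alpha> * (if i = j then 1 else 0) + (2 * \<alpha> * \<beta> + \<beta> * \<beta> * q)"
    if "i \<in> {1..<n}" and "j \<in> {1..<n}" for i j
    using that
    by (simp add: Y_def inner_add_left inner_add_right orthonormal es se ss algebra_simps)
  show ?thesis
  proof (intro exI[of _ Y] ballI)
    fix i j assume "i \<in> {1..n}" and "j \<in> {1..n}"
    then consider "i = n" "j = n" | "i = n" "j \<in> {1..<n}" | "i \<in> {1..<n}" "j = n"
      | "i \<in> {1..<n}" "j \<in> {1..<n}"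
      by fastforce
    then show "inner (Y i) (Y j) = (if i = j then 1 else - 1 / (real n - 1))"
      by cases (use Ynn Yin Yij alpha_sq cross_coeff in \<open>auto simp: inner_commute q_def\<close>)
  qed
qed

lemma exists_regular_simplex:
  assumes "2 \<le> n" and "n \<le> CARD('d) + 1"
  shows "\<exists>Y :: nat \<Rightarrow> real ^ 'd. \<forall>i\<in>{1..n}. \<forall>j\<in>{1..n}.
           inner (Y i) (Y j) = (if i = j then 1 else - 1 / (real n - 1))"
proof -
  have "card {1..<n} \<le> CARD('d)" using assms(2) by simp
  then obtain f :: "nat \<Rightarrow> 'd" where "inj_on f {1..<n}"
    using card_le_inj[of "{1..<n}" "UNIV :: 'd set"] by auto
  then show ?thesis
    using assms(1)
    by (intro regular_simplex_from_orthonormal[where e = "\<lambda>i. axis (f i) (1::real)"])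
      (auto simp: inner_axis_axis inj_on_eq_iff)
qed

lemma loss_regular_simplex:
  fixes Y :: "nat \<Rightarrow> real ^ 'd"
  assumes "\<forall>i\<in>{1..n}. \<forall>j\<in>{1..n}. i \<noteq> j \<longrightarrow> inner (Y i) (Y j) = - 1 / (real n - 1)"
  shows "loss \<tau> c n Y = n * uniform_term c n (- 1 / ((real n - 1) * \<tau>))"
proof -
  have "ln (c + (\<Sum>j\<in>{1..n}-{k}. exp (inner (Y j) (Y k) / \<tau>)))
          = uniform_term c n (- 1 / ((real n - 1) * \<tau>))" if "k \<in> {1..n}" for k
  proof -
    have "(\<Sum>j\<in>{1..n}-{k}. exp (inner (Y j) (Y k) / \<tau>))
            = (\<Sum>j\<in>{1..n}-{k}. exp (- 1 / ((real n - 1) * \<tau>)))"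
      using assms that by (intro sum.cong) auto
    then show ?thesis using card_others[OF that] by (simp add: uniform_term_def)
  qed
  then show ?thesis by (simp add: loss_def)
qed

lemma sum_uniform_term_le_loss:
  fixes X :: "nat \<Rightarrow> real ^ 'd"
  assumes "c > 0"
  shows "(\<Sum>k=1..n. uniform_term c n (mean_exponent \<tau> n X k)) \<le> loss \<tau> c n X"
  unfolding loss_def using assms by (intro sum_mono uniform_term_mean_exponent_le) auto

lemma loss_le_simplex_loss_imp_tight:
  fixes X :: "nat \<Rightarrow> real ^ 'd"
  assumes "2 \<le> n" and "\<tau> > 0" and "c > 0" and "\<forall>i\<in>{1..n}. norm (X i) = 1"
    and "loss \<tau> c n X \<le> n * uniform_term c n (- 1 / ((real n - 1) * \<tau>))"
  shows "(\<Sum>i=1..n. X i) = 0"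
    and "(\<Sum>k=1..n. uniform_term c n (mean_exponent \<tau> n X k)) = loss \<tau> c n X"
proof -
  obtain p where "p > 0"
    and "n * uniform_term c n (- 1 / ((real n - 1) * \<tau>)) + p * (norm (\<Sum>i=1..n. X i))\<^sup>2
                  \<le> (\<Sum>k=1..n. uniform_term c n (mean_exponent \<tau> n X k))"
    using sum_uniform_term_ge[OF assms(1-4)] by blast
  moreover have "0 \<le> p * (norm (\<Sum>i=1..n. X i))\<^sup>2"
    using \<open>p > 0\<close> by simp
  ultimately have "p * (norm (\<Sum>i=1..n. X i))\<^sup>2 = 0"
    and "(\<Sum>k=1..n. uniform_term c n (mean_exponent \<tau> n X k)) = loss \<tau> c n X"
    using sum_uniform_term_le_loss[OF assms(3), of n \<tau> X] assms(5) by linarith+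
  then show "(\<Sum>i=1..n. X i) = 0"
    and "(\<Sum>k=1..n. uniform_term c n (mean_exponent \<tau> n X k)) = loss \<tau> c n X"
    using \<open>p > 0\<close> by simp_all
qed

lemma inner_eq_if_sum_uniform_term_eq_loss:
  fixes X :: "nat \<Rightarrow> real ^ 'd"
  assumes "\<tau> > 0" and "c > 0" and "\<forall>i\<in>{1..n}. norm (X i) = 1" and "(\<Sum>i=1..n. X i) = 0"
    and tight: "(\<Sum>k=1..n. uniform_term c n (mean_exponent \<tau> n X k)) = loss \<tau> c n X"
    and "k \<in> {1..n}" and "j \<in> {1..n}-{k}"
  shows "inner (X j) (X k) = - 1 / (real n - 1)"
proof -
  have "uniform_term c n (mean_exponent \<tau> n X i)
          \<le> ln (c + (\<Sum>j\<in>{1..n}-{i}. exp (inner (X j) (X i) / \<tau>)))" if "i \<in> {1..n}" for i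
    using uniform_term_mean_exponent_le[OF that assms(2)] .
  then have "uniform_term c n (mean_exponent \<tau> n X k)
               = ln (c + (\<Sum>j\<in>{1..n}-{k}. exp (inner (X j) (X k) / \<tau>)))"
    using sum_mono_inv[OF tight[unfolded loss_def]] assms(6) by simp
  then have "inner (X j) (X k) / \<tau> = mean_exponent \<tau> n X k"
    using exponent_eq_mean_exponent assms(2,6,7) by blast
  also have "\<dots> = (- 1 / (real n - 1)) / \<tau>"
    using mean_exponent_of_sum_eq_0[of k n X \<tau>] assms(3,4,6) by simp
  finally show ?thesis using assms(1) by (simp only: divide_cancel_right) simp
qed

theorem lemma13:
  fixes X :: "nat \<Rightarrow> real ^ 'd" and n :: nat and \<tau> c :: real
  assumes "2 \<le> n" and "n \<le> CARD('d) + 1"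
    and "\<tau> > 0" and "c > 0"
    and "is_minimizer \<tau> c n X"
  shows "(\<Sum>i=1..n. X i) = 0 \<and>
         (\<forall>i\<in>{1..n}. \<forall>j\<in>{1..n}. i \<noteq> j \<longrightarrow> inner (X i) (X j) = - 1 / (real n - 1))"
proof -
  have unit: "\<forall>i\<in>{1..n}. norm (X i) = 1"
    and minimal: "\<And>Y :: nat \<Rightarrow> real ^ 'd. sphere_config n Y \<Longrightarrow> loss \<tau> c n X \<le> loss \<tau> c n Y"
    using assms(5) by (auto simp: is_minimizer_def sphere_config_def)
  obtain Y :: "nat \<Rightarrow> real ^ 'd" where Y: "\<forall>i\<in>{1..n}. \<forall>j\<in>{1..n}.
      inner (Y i) (Y j) = (if i = j then 1 else - 1 / (real n - 1))"
    using exists_regular_simplex[OF assms(1,2)] by blast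
  then have "loss \<tau> c n X \<le> n * uniform_term c n (- 1 / ((real n - 1) * \<tau>))"
    using minimal[of Y] loss_regular_simplex[of n Y \<tau> c]
    by (simp add: sphere_config_def norm_eq_1)
  then have sum_zero: "(\<Sum>i=1..n. X i) = 0"
    and tight: "(\<Sum>k=1..n. uniform_term c n (mean_exponent \<tau> n X k)) = loss \<tau> c n X"
    using loss_le_simplex_loss_imp_tight[OF assms(1,3,4) unit] by blast+
  show ?thesis
    using inner_eq_if_sum_uniform_term_eq_loss[OF assms(3,4) unit sum_zero tight] sum_zero
    by auto
qed

end
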